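(* Let $c\ge 3$ and let $G$ be a $c$-edge-colored multigraph (without loops, and with no two parallel edges of the same color) with $n$ vertices, such that $|E_{uv}|\le c-1$ for every pair of distinct vertices $u,v$. If $\delta_i(x)\ge n/2$ for every $x\in V(G)$ and every $i\in\{1,\ldots,c\}$, then $G$ has a properly colored hamiltonian cycle.
   Context: A $c$-edge-colored multigraph is a finite multigraph without loops (parallel edges allowed) together with a map $\phi:E(G)\to\{1,\ldots,c\}$. For $u,v\in V(G)$, $E_{uv}$ is the set of edges with end vertices $u$ and $v$. For $x\in V(G)$ and a color $i$, $\delta_i(x)$ is the number of vertices joined to $x$ by an edge of color $i$. A properly colored (PC) hamiltonian cycle is a cyclic sequence $(x_1,f_1,x_2,f_2,\ldots,x_n,f_n,x_1)$ containing every vertex exactly once, with $f_i\in E_{x_ix_{i+1}}$ (indices mod $n$), such that any two consecutive edges, including $f_n$ and $f_1$, have different colors. *)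

theory Defs
  imports Main
begin

text \<open>A c-edge-colored multigraph without loops and without two parallel edges of
the same colour is determined by its finite vertex set V and, for each pair u v,
the set col u v of colours of the edges joining u and v (so |E_uv| = card (col u v)).\<close>

definition ec_multigraph :: "nat \<Rightarrow> 'a set \<Rightarrow> ('a \<Rightarrow> 'a \<Rightarrow> nat set) \<Rightarrow> bool" where
  "ec_multigraph c V col \<longleftrightarrow> finite V
     \<and> (\<forall>u v. col u v = col v u)
     \<and> (\<forall>u. col u u = {})
     \<and> (\<forall>u v. col u v \<noteq> {} \<longrightarrow> u \<in> V \<and> v \<in> V)
     \<and> (\<forall>u v. col u v \<subseteq> {1..c})"

definition col_degree :: "'a set \<Rightarrow> ('a \<Rightarrow> 'a \<Rightarrow> nat set) \<Rightarrow> nat \<Rightarrow> 'a \<Rightarrow> nat" where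
  "col_degree V col i x = card {y \<in> V. i \<in> col x y}"

text \<open>A properly coloured hamiltonian cycle (x_1,f_1,...,x_n,f_n,x_1): the vertices
are listed in xs (each vertex of V exactly once), and fs ! k is the colour of the
edge f_k joining xs!k and xs!((k+1) mod n); consecutive edges (cyclically) have
different colours.\<close>
definition PC_ham_cycle :: "'a set \<Rightarrow> ('a \<Rightarrow> 'a \<Rightarrow> nat set) \<Rightarrow> 'a list \<Rightarrow> nat list \<Rightarrow> bool" where
  "PC_ham_cycle V col xs fs \<longleftrightarrow>
     distinct xs \<and> set xs = V \<and> length fs = length xs
     \<and> (\<forall>k < length xs. fs ! k \<in> col (xs ! k) (xs ! ((k + 1) mod length xs)))
     \<and> (\<forall>k < length xs. fs ! k \<noteq> fs ! ((k + 1) mod length xs))"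

definition has_PC_ham_cycle :: "'a set \<Rightarrow> ('a \<Rightarrow> 'a \<Rightarrow> nat set) \<Rightarrow> bool" where
  "has_PC_ham_cycle V col \<longleftrightarrow> (\<exists>xs fs. PC_ham_cycle V col xs fs)"

end

theory Submission
  imports Defs
begin

(* Call u and v multi-adjacent when at least two edges join them.  Summing the colour
   degrees of x and using |E_xy| <= c - 1 shows that x has more than n/2 multi-adjacent
   neighbours.  By Dirac's theorem (proved with Posa's reversal: a cyclic ordering of V with
   the largest number of adjacent consecutive pairs has no gap) there is a hamiltonian path
   x_0 ... x_(n-1) all of whose edges are multi-edges.  Pick a colour g missing on x_0 x_1.
   As x_0 has at least n/2 neighbours in colour g and x_(n-1) more than n/2 multi-adjacent
   neighbours, some i has g on x_0 x_(i+1) and x_(n-1) multi-adjacent to x_i.  The cycle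
   x_0 x_(i+1) ... x_(n-1) x_i ... x_1 x_0 starts with an edge of colour g, closes with an
   edge lacking g, and all its other edges carry two colours, so edge colours can be chosen
   greedily along it. *)

section \<open>Hamiltonian cycles in dense graphs\<close>

fun path_edges :: "('a \<Rightarrow> 'a \<Rightarrow> bool) \<Rightarrow> 'a list \<Rightarrow> nat" where
  "path_edges E (x # y # zs) = (if E x y then 1 else 0) + path_edges E (y # zs)"
| "path_edges E _ = 0"

definition cycle_edges :: "('a \<Rightarrow> 'a \<Rightarrow> bool) \<Rightarrow> 'a list \<Rightarrow> nat" where
  "cycle_edges E xs = path_edges E xs + (if xs \<noteq> [] \<and> E (last xs) (hd xs) then 1 else 0)"

lemma path_edges_append:
  "xs \<noteq> [] \<Longrightarrow> ys \<noteq> [] \<Longrightarrow>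
   path_edges E (xs @ ys) = path_edges E xs + (if E (last xs) (hd ys) then 1 else 0) + path_edges E ys"
  by (induction E xs rule: path_edges.induct) (auto simp: neq_Nil_conv)

lemma path_edges_rev:
  assumes "symp E"
  shows "path_edges E (rev xs) = path_edges E xs"
proof (induction xs rule: induct_list012)
  case (3 x y zs)
  then show ?case
    using path_edges_append[of "rev (y # zs)" "[x]"] sympD[OF assms, of x y] sympD[OF assms, of y x]
    by (auto simp: last_rev)
qed simp_all

lemma cycle_edges_rotate1: "cycle_edges E (rotate1 xs) = cycle_edges E xs"
proof (cases xs)
  case (Cons x ys)
  then show ?thesis
    using path_edges_append[of ys "[x]" E]
    by (cases ys) (auto simp: cycle_edges_def)
qed simp

lemma cycle_edges_rotate: "cycle_edges E (rotate m xs) = cycle_edges E xs"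
  by (induction m) (simp_all add: cycle_edges_rotate1)

lemma cycle_edges_le_length: "cycle_edges E xs \<le> length xs"
proof -
  have "path_edges E xs \<le> length xs - 1"
    by (induction E xs rule: path_edges.induct) auto
  then show ?thesis
    by (cases xs) (auto simp: cycle_edges_def)
qed

lemma card_nth_indices:
  assumes "distinct xs"
  shows "card {j. j < length xs \<and> P (xs ! j)} = card {y \<in> set xs. P y}"
proof -
  have "{y \<in> set xs. P y} = (!) xs ` {j. j < length xs \<and> P (xs ! j)}"
    by (auto simp: in_set_conv_nth)
  moreover have "inj_on ((!) xs) {j. j < length xs \<and> P (xs ! j)}"
    using assms by (auto intro: inj_on_nth)
  ultimately show ?thesis
    by (simp add: card_image)
qed

lemma posa_crossing_index:
  assumes "distinct xs" "xs \<noteq> []" "\<not> P (hd xs)" "\<not> Q (last xs)"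
    and "length xs \<le> card {y \<in> set xs. P y} + card {y \<in> set xs. Q y}"
  obtains i where "Suc i < length xs" "P (xs ! Suc i)" "Q (xs ! i)"
proof -
  let ?n = "length xs"
  define A where "A = {i. Suc i < ?n \<and> P (xs ! Suc i)}"
  define B where "B = {i. Suc i < ?n \<and> Q (xs ! i)}"
  have "Suc ` A = {j. j < ?n \<and> P (xs ! j)}"
  proof (intro set_eqI iffI)
    fix j assume j: "j \<in> {j. j < ?n \<and> P (xs ! j)}"
    with assms(2,3) have "j \<noteq> 0" by (metis hd_conv_nth mem_Collect_eq)
    with j show "j \<in> Suc ` A"
      unfolding A_def by (auto intro!: image_eqI[of _ _ "j - 1"])
  qed (auto simp: A_def)
  then have card_A: "card A = card {y \<in> set xs. P y}"
    using card_nth_indices[OF assms(1)] card_image[of Suc A] by simp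
  have "B = {j. j < ?n \<and> Q (xs ! j)}"
  proof (intro set_eqI iffI)
    fix j assume j: "j \<in> {j. j < ?n \<and> Q (xs ! j)}"
    with assms(2,4) have "j \<noteq> ?n - 1" by (auto simp: last_conv_nth)
    with j show "j \<in> B"
      unfolding B_def by auto
  qed (auto simp: B_def)
  then have card_B: "card B = card {y \<in> set xs. Q y}"
    using card_nth_indices[OF assms(1)] by simp
  have "A \<inter> B \<noteq> {}"
  proof
    assume "A \<inter> B = {}"
    have "A \<union> B \<subseteq> {..< ?n - 1}"
      unfolding A_def B_def by auto
    then have "card (A \<union> B) \<le> ?n - 1"
      using card_mono[of "{..< ?n - 1}" "A \<union> B"] by simp
    moreover have "finite A" "finite B"
      using \<open>A \<union> B \<subseteq> {..< ?n - 1}\<close> finite_subset by blast+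
    ultimately have "card A + card B \<le> ?n - 1"
      using card_Un_disjoint \<open>A \<inter> B = {}\<close> by metis
    moreover have "0 < ?n"
      using assms(2) by simp
    ultimately show False
      using assms(5) card_A card_B by linarith
  qed
  then show thesis
    using that unfolding A_def B_def by blast
qed

lemma cycle_edges_increase:
  assumes "symp E" "irreflp E" "distinct xs" "xs \<noteq> []" "\<not> E (last xs) (hd xs)"
    and "length xs \<le> card {y \<in> set xs. E (hd xs) y} + card {y \<in> set xs. E (last xs) y}"
  obtains ys where "distinct ys" "set ys = set xs" "cycle_edges E xs < cycle_edges E ys"
proof -
  have "\<not> E (hd xs) (hd xs)" "\<not> E (last xs) (last xs)"
    using assms(2) by (simp_all add: irreflpD)
  then obtain i where i: "Suc i < length xs" "E (hd xs) (xs ! Suc i)" "E (last xs) (xs ! i)"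
    using posa_crossing_index[of xs "E (hd xs)" "E (last xs)"] assms(3,4,6) by blast
  define as where "as = take (Suc i) xs"
  define bs where "bs = drop (Suc i) xs"
  have xs: "xs = as @ bs" and ne: "as \<noteq> []" "bs \<noteq> []"
    using i(1) unfolding as_def bs_def by auto
  have ends: "last as = xs ! i" "hd bs = xs ! Suc i" "hd as = hd xs" "last bs = last xs"
    using i(1) unfolding as_def bs_def
    by (simp add: take_Suc_conv_app_nth, simp add: hd_drop_conv_nth, simp add: hd_take, simp)
  have "\<not> E (last bs) (hd as)"
    using assms(5) ends by simp
  then have "cycle_edges E xs \<le> path_edges E as + 1 + path_edges E bs"
    unfolding xs cycle_edges_def using ne by (simp add: path_edges_append)
  moreover have "cycle_edges E (as @ rev bs) = path_edges E as + 1 + path_edges E bs + 1"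
  proof -
    have "path_edges E (as @ rev bs) = path_edges E as + 1 + path_edges E bs"
    proof -
      have "E (last as) (hd (rev bs))"
        using ne ends sympD[OF assms(1) i(3)] by (simp add: hd_rev)
      then show ?thesis
        using path_edges_append[of as "rev bs" E] ne path_edges_rev[OF assms(1), of bs] by simp
    qed
    moreover have "E (last (as @ rev bs)) (hd (as @ rev bs))"
      using ne ends sympD[OF assms(1) i(2)] by (simp add: last_rev)
    ultimately show ?thesis
      unfolding cycle_edges_def using ne by simp
  qed
  ultimately have "cycle_edges E xs < cycle_edges E (as @ rev bs)"
    by linarith
  moreover have "distinct (as @ rev bs)" "set (as @ rev bs) = set xs"
    using assms(3) unfolding xs by auto
  ultimately show thesis
    using that by blast
qed

lemma successively_if_rotations_closed:
  assumes "\<And>m. E (last (rotate m xs)) (hd (rotate m xs))"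
  shows "successively E xs"
  unfolding successively_conv_nth
proof (intro allI impI)
  fix k assume k: "Suc k < length xs"
  have "rotate (Suc k) xs = drop (Suc k) xs @ take (Suc k) xs"
    using k by (simp add: rotate_drop_take)
  then have "last (rotate (Suc k) xs) = xs ! k" "hd (rotate (Suc k) xs) = xs ! Suc k"
    using k by (simp_all add: take_Suc_conv_app_nth hd_drop_conv_nth)
  then show "E (xs ! k) (xs ! Suc k)"
    using assms[of "Suc k"] by simp
qed

theorem ore_hamiltonian_cycle:
  assumes "symp E" "irreflp E" "finite V" "3 \<le> card V"
    and ore: "\<And>x y. x \<in> V \<Longrightarrow> y \<in> V \<Longrightarrow> x \<noteq> y \<Longrightarrow> \<not> E x y \<Longrightarrow>
                card V \<le> card {z \<in> V. E x z} + card {z \<in> V. E y z}"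
  obtains xs where "distinct xs" "set xs = V" "successively E xs" "E (last xs) (hd xs)"
proof -
  define ham_order where "ham_order xs \<longleftrightarrow> distinct xs \<and> set xs = V" for xs
  obtain xs0 where "ham_order xs0"
    using finite_distinct_list[OF assms(3)] unfolding ham_order_def by blast
  moreover have "\<forall>ys. ham_order ys \<longrightarrow> cycle_edges E ys < card V + 1"
    using cycle_edges_le_length distinct_card unfolding ham_order_def by (metis le_imp_less_Suc Suc_eq_plus1)
  ultimately obtain xs where xs: "ham_order xs"
    and max: "\<And>ys. ham_order ys \<Longrightarrow> cycle_edges E ys \<le> cycle_edges E xs"
    using ex_has_greatest_nat[of ham_order xs0 "cycle_edges E"] by blast
  have len: "length xs = card V"
    using xs distinct_card unfolding ham_order_def by metis
  have closed: "E (last (rotate m xs)) (hd (rotate m xs))" for m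
  proof (rule ccontr)
    let ?ys = "rotate m xs"
    assume open_end: "\<not> E (last ?ys) (hd ?ys)"
    have ys: "distinct ?ys" "set ?ys = V" "length ?ys = card V"
      using xs len unfolding ham_order_def by simp_all
    have "?ys \<noteq> []"
      using ys(3) assms(4) by auto
    moreover have "hd ?ys \<noteq> last ?ys"
      using ys(1,3) assms(4) calculation
      by (simp add: hd_conv_nth last_conv_nth nth_eq_iff_index_eq del: length_rotate)
    ultimately have "length ?ys \<le> card {z \<in> set ?ys. E (hd ?ys) z} + card {z \<in> set ?ys. E (last ?ys) z}"
      using ore[of "hd ?ys" "last ?ys"] open_end ys sympD[OF assms(1), of "hd ?ys" "last ?ys"]
        hd_in_set[of ?ys] last_in_set[of ?ys] by auto
    then obtain zs where "ham_order zs" "cycle_edges E ?ys < cycle_edges E zs"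
      using cycle_edges_increase[OF assms(1,2) ys(1) \<open>?ys \<noteq> []\<close> open_end] ys(2)
      unfolding ham_order_def by metis
    then show False
      using max cycle_edges_rotate[of E m xs] by fastforce
  qed
  have "successively E xs"
    using closed by (rule successively_if_rotations_closed)
  then show thesis
    using that closed[of 0] xs unfolding ham_order_def by auto
qed

corollary dirac_hamiltonian_cycle:
  assumes "symp E" "irreflp E" "finite V" "3 \<le> card V"
    and "\<And>x. x \<in> V \<Longrightarrow> card V \<le> 2 * card {y \<in> V. E x y}"
  obtains xs where "distinct xs" "set xs = V" "successively E xs" "E (last xs) (hd xs)"
proof (rule ore_hamiltonian_cycle[OF assms(1-4)])
  fix x y assume "x \<in> V" "y \<in> V"
  then show "card V \<le> card {z \<in> V. E x z} + card {z \<in> V. E y z}"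
    using assms(5)[of x] assms(5)[of y] by linarith
qed (use that in blast)

lemma successively_posa_rotation:
  assumes "symp E" "successively E xs" "i < length xs" "0 < i" "E (last xs) (xs ! (i - 1))"
  shows "successively E (drop i xs @ rev (take i xs))"
proof -
  have "successively E (take i xs)" "successively E (drop i xs)"
    using assms(2) successively_append_iff[of E "take i xs" "drop i xs"] by simp_all
  moreover have "successively (\<lambda>x y. E y x) (take i xs)"
    using calculation(1) by (rule successively_mono) (use assms(1) in \<open>auto dest: sympD\<close>)
  moreover have "last (drop i xs) = last xs"
    using assms(3) by simp
  moreover have "hd (rev (take i xs)) = xs ! (i - 1)"
  proof -
    have "take i xs = take (i - 1) xs @ [xs ! (i - 1)]"
      using assms(3,4) take_Suc_conv_app_nth[of "i - 1" xs] by simp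
    then show ?thesis
      by (simp add: hd_rev)
  qed
  ultimately show ?thesis
    using assms(5) by (auto simp: successively_append_iff)
qed

section \<open>Greedy list colouring along a cycle\<close>

lemma path_list_colouring:
  fixes L :: "nat \<Rightarrow> 'c set"
  assumes "\<gamma> \<in> L 0" and "\<And>k. 0 < k \<Longrightarrow> k < n \<Longrightarrow> 2 \<le> card (L k)"
  shows "\<exists>f. f 0 = \<gamma> \<and> (\<forall>k<n. f k \<in> L k) \<and> (\<forall>k. Suc k < n \<longrightarrow> f (Suc k) \<noteq> f k)"
  using assms(2)
proof (induction n)
  case 0
  then show ?case by auto
next
  case (Suc n)
  then obtain f where f: "f 0 = \<gamma>" "\<forall>k<n. f k \<in> L k" "\<forall>k. Suc k < n \<longrightarrow> f (Suc k) \<noteq> f k"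
    by auto
  show ?case
  proof (cases n)
    case 0
    then show ?thesis
      using f(1) assms(1) by auto
  next
    case (Suc m)
    have "\<not> L n \<subseteq> {f m}"
      using Suc.prems[of n] Suc card_mono[of "{f m}" "L n"] by fastforce
    then obtain b where "b \<in> L n" "b \<noteq> f m"
      by blast
    then show ?thesis
      using f Suc by (intro exI[of _ "f(n := b)"]) (auto simp: less_Suc_eq)
  qed
qed

lemma cycle_list_colouring:
  fixes L :: "nat \<Rightarrow> 'c set"
  assumes "\<gamma> \<in> L 0" "\<gamma> \<notin> L (n - 1)" and "\<And>k. 0 < k \<Longrightarrow> k < n \<Longrightarrow> 2 \<le> card (L k)"
  shows "\<exists>f. \<forall>k<n. f k \<in> L k \<and> f k \<noteq> f ((k + 1) mod n)"
proof -
  obtain f where f: "f 0 = \<gamma>" "\<forall>k<n. f k \<in> L k" "\<forall>k. Suc k < n \<longrightarrow> f (Suc k) \<noteq> f k"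
    using path_list_colouring[of \<gamma> L n] assms(1,3) by blast
  have "f k \<noteq> f ((k + 1) mod n)" if "k < n" for k
  proof (cases "Suc k < n")
    case True
    then show ?thesis using f(3) by auto
  next
    case False
    then have "k = n - 1" "k + 1 = n"
      using that by auto
    then show ?thesis
      using f that assms(2) by auto
  qed
  then show ?thesis
    using f(2) by blast
qed

section \<open>Properly coloured hamiltonian cycles\<close>

definition multi_edge :: "('a \<Rightarrow> 'a \<Rightarrow> nat set) \<Rightarrow> 'a \<Rightarrow> 'a \<Rightarrow> bool" where
  "multi_edge col u v \<longleftrightarrow> 2 \<le> card (col u v)"

lemma has_PC_ham_cycleI:
  assumes "distinct (x # p)" "p \<noteq> []"
    and "successively (multi_edge col) p" "multi_edge col (last p) x"
    and "\<gamma> \<in> col x (hd p)" "\<gamma> \<notin> col (last p) x"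
  shows "has_PC_ham_cycle (set (x # p)) col"
proof -
  let ?ys = "x # p"
  let ?n = "length ?ys"
  define L where "L k = col (?ys ! k) (?ys ! ((k + 1) mod ?n))" for k
  have n: "2 \<le> ?n"
    using assms(2) by (cases p) auto
  have "\<gamma> \<in> L 0"
    using assms(2,5) n by (simp add: L_def hd_conv_nth)
  moreover have last: "L (?n - 1) = col (last p) x"
    using assms(2) by (simp add: L_def last_conv_nth)
  moreover have "2 \<le> card (L k)" if "0 < k" "k < ?n" for k
  proof (cases "Suc k < ?n")
    case True
    then have "L k = col (p ! (k - 1)) (p ! Suc (k - 1))"
      using that by (simp add: L_def)
    then show ?thesis
      using successively_nth[OF assms(3), of "k - 1"] True that by (simp add: multi_edge_def)
  next
    case False
    then have "k = ?n - 1"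
      using that by linarith
    then show ?thesis
      using last assms(4) by (simp add: multi_edge_def)
  qed
  ultimately obtain f where f: "\<forall>k<?n. f k \<in> L k \<and> f k \<noteq> f ((k + 1) mod ?n)"
    using cycle_list_colouring[of \<gamma> L ?n] assms(6) by auto
  have "PC_ham_cycle (set ?ys) col ?ys (map f [0..<?n])"
    unfolding PC_ham_cycle_def using assms(1) f
    by (simp add: L_def del: upt_Suc)
  then show ?thesis
    unfolding has_PC_ham_cycle_def by blast
qed

lemma has_PC_ham_cycle_if_crossing:
  assumes col_sym: "\<And>u v. col u v = col v u"
    and "distinct xs" and path: "successively (multi_edge col) xs"
    and i: "Suc i < length xs" "multi_edge col (last xs) (xs ! i)"
    and "\<gamma> \<in> col (hd xs) (xs ! Suc i)" "\<gamma> \<notin> col (hd xs) (xs ! 1)"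
  shows "has_PC_ham_cycle (set xs) col"
proof -
  obtain x xt where xs: "xs = x # xt"
    using i(1) by (cases xs) auto
  have "i \<noteq> 0"
    using assms(6,7) by (cases i) auto
  define p where "p = drop i xt @ rev (take i xt)"
  have "xt \<noteq> []"
    using i(1) xs by auto
  have ends: "hd p = xs ! Suc i" "last p = xs ! 1"
    using i(1) \<open>i \<noteq> 0\<close> \<open>xt \<noteq> []\<close>
    by (simp add: p_def xs hd_append hd_drop_conv_nth,
        simp add: p_def xs last_append last_rev hd_take hd_conv_nth[OF \<open>xt \<noteq> []\<close>])
  have "successively (multi_edge col) xt"
    using path \<open>xt \<noteq> []\<close> by (simp add: xs successively_Cons)
  moreover have "symp (multi_edge col)"
    by (auto intro!: sympI simp: multi_edge_def col_sym)
  moreover have "multi_edge col (last xt) (xt ! (i - 1))"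
    using i(2) \<open>i \<noteq> 0\<close> \<open>xt \<noteq> []\<close> by (simp add: xs nth_Cons')
  ultimately have "successively (multi_edge col) p"
    unfolding p_def using i(1) \<open>i \<noteq> 0\<close> xs by (intro successively_posa_rotation) auto
  moreover have "multi_edge col (last p) x"
    using successively_nth[OF path, of 0] \<open>xt \<noteq> []\<close> ends by (simp add: xs multi_edge_def col_sym)
  moreover have "set (x # p) = set xs"
    unfolding p_def xs by (metis Un_commute append_take_drop_id set_append set_rev list.set(2))
  moreover have "distinct (x # p)"
    using assms(2) set_take_disj_set_drop_if_distinct[of xt i i]
      in_set_takeD[of x i xt] in_set_dropD[of x i xt]
    unfolding p_def xs by auto
  moreover have "p \<noteq> []"
    using i(1) by (simp add: p_def xs)
  ultimately show ?thesis
    using has_PC_ham_cycleI[of x p col \<gamma>] assms(6,7) ends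
    by (auto simp: xs col_sym)
qed

lemma sum_col_degree:
  assumes "finite V" "\<And>y. col x y \<subseteq> {1..c}"
  shows "(\<Sum>i\<in>{1..c}. col_degree V col i x) = (\<Sum>y\<in>V. card (col x y))"
proof -
  have "(\<Sum>i\<in>{1..c}. col_degree V col i x) = (\<Sum>i\<in>{1..c}. \<Sum>y\<in>V. if i \<in> col x y then 1 else 0)"
    unfolding col_degree_def using assms(1) by (simp add: sum.inter_filter[symmetric])
  also have "\<dots> = (\<Sum>y\<in>V. \<Sum>i\<in>{1..c}. if i \<in> col x y then 1 else 0)"
    by (rule sum.swap)
  also have "\<dots> = (\<Sum>y\<in>V. card (col x y))"
  proof (rule sum.cong)
    fix y
    have "col x y = {i \<in> {1..c}. i \<in> col x y}"
      using assms(2)[of y] by blast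
    then show "(\<Sum>i\<in>{1..c}. if i \<in> col x y then 1 else 0) = card (col x y)"
      by (simp add: sum.inter_filter[symmetric])
  qed simp
  finally show ?thesis .
qed

lemma card_neighbours_less:
  assumes "irreflp E" "finite V" "x \<in> V"
  shows "card {y \<in> V. E x y} < card V"
  using assms by (intro psubset_card_mono) (auto dest: irreflpD)

lemma sum_multiplicities_le:
  assumes "ec_multigraph c V col"
    and "\<forall>u\<in>V. \<forall>v\<in>V. u \<noteq> v \<longrightarrow> card (col u v) \<le> c - 1" "x \<in> V"
  shows "(\<Sum>y\<in>V. card (col x y)) \<le> (card V - 1) + (c - 2) * card {y \<in> V. multi_edge col x y}"
proof -
  have fin: "finite V" and loop: "col x x = {}"
    using assms(1) unfolding ec_multigraph_def by auto
  define N where "N = {y \<in> V. multi_edge col x y}"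
  have "(\<Sum>y\<in>V. card (col x y)) = (\<Sum>y\<in>V - {x}. card (col x y))"
    using sum.remove[OF fin assms(3), of "\<lambda>y. card (col x y)"] loop by simp
  also have "\<dots> \<le> (\<Sum>y\<in>V - {x}. 1 + (if y \<in> N then c - 2 else 0))"
  proof (rule sum_mono)
    fix y assume "y \<in> V - {x}"
    then have "card (col x y) \<le> c - 1"
      using assms(2,3) by auto
    then show "card (col x y) \<le> 1 + (if y \<in> N then c - 2 else 0)"
      using \<open>y \<in> V - {x}\<close> unfolding N_def multi_edge_def by auto
  qed
  also have "\<dots> = (card V - 1) + (c - 2) * card N"
  proof -
    have "N \<subseteq> V - {x}"
      using loop unfolding N_def multi_edge_def by auto
    then have "{y \<in> V - {x}. y \<in> N} = N"
      by blast
    then have "(\<Sum>y\<in>V - {x}. if y \<in> N then c - 2 else 0) = (\<Sum>y\<in>N. c - 2)"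
      using sum.inter_filter[of "V - {x}" "\<lambda>_. c - 2" "\<lambda>y. y \<in> N"] fin by simp
    then show ?thesis
      using fin assms(3) by (simp only: sum.distrib) simp
  qed
  finally show ?thesis
    unfolding N_def .
qed

lemma many_multi_edge_neighbours:
  assumes "2 \<le> c" "ec_multigraph c V col"
    and "\<forall>u\<in>V. \<forall>v\<in>V. u \<noteq> v \<longrightarrow> card (col u v) \<le> c - 1"
    and "\<forall>i\<in>{1..c}. card V \<le> 2 * col_degree V col i x" "x \<in> V"
  shows "card V < 2 * card {y \<in> V. multi_edge col x y}"
proof -
  have fin: "finite V" and range: "\<And>y. col x y \<subseteq> {1..c}"
    using assms(2) unfolding ec_multigraph_def by auto
  let ?N = "card {y \<in> V. multi_edge col x y}"
  have "c * card V = (\<Sum>i\<in>{1..c}. card V)"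
    by simp
  also have "\<dots> \<le> (\<Sum>i\<in>{1..c}. 2 * col_degree V col i x)"
    using assms(4) by (intro sum_mono) auto
  also have "\<dots> = 2 * (\<Sum>y\<in>V. card (col x y))"
    by (simp only: sum_distrib_left[symmetric] sum_col_degree[of V col x c, OF fin range])
  also have "\<dots> \<le> 2 * (card V - 1) + 2 * ((c - 2) * ?N)"
    using sum_multiplicities_le[OF assms(2,3,5)] by linarith
  finally have bound: "c * card V \<le> 2 * (card V - 1) + 2 * ((c - 2) * ?N)" .
  show ?thesis
  proof (rule ccontr)
    assume "\<not> card V < 2 * ?N"
    then have "2 * ((c - 2) * ?N) \<le> (c - 2) * card V"
      by simp
    moreover have "c * card V = (c - 2) * card V + 2 * card V"
      using assms(1) add_mult_distrib[of "c - 2" 2 "card V"] le_add_diff_inverse2[of 2 c] by argo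
    moreover have "0 < card V"
      using fin assms(5) card_gt_0_iff by blast
    ultimately show False
      using bound by linarith
  qed
qed

lemma has_PC_ham_cycle_if_ham_path:
  assumes "0 < c" "ec_multigraph c V col"
    and "\<forall>u\<in>V. \<forall>v\<in>V. u \<noteq> v \<longrightarrow> card (col u v) \<le> c - 1"
    and "\<forall>x\<in>V. \<forall>i\<in>{1..c}. card V \<le> 2 * col_degree V col i x"
    and xs: "distinct xs" "set xs = V" "2 \<le> length xs" "successively (multi_edge col) xs"
    and last_deg: "card V < 2 * card {y \<in> V. multi_edge col (last xs) y}"
  shows "has_PC_ham_cycle V col"
proof -
  have col_sym: "\<And>u v. col u v = col v u" and loop: "\<And>u. col u u = {}"
    and range: "\<And>u v. col u v \<subseteq> {1..c}"
    using assms(2) unfolding ec_multigraph_def by auto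
  have len: "length xs = card V"
    using xs distinct_card by metis
  have "xs \<noteq> []"
    using xs(3) by auto
  then have "hd xs \<in> V" "xs ! 1 \<in> V" "hd xs \<noteq> xs ! 1"
    using xs(1-3) by (auto simp: hd_conv_nth nth_eq_iff_index_eq simp del: One_nat_def)
  then have "card (col (hd xs) (xs ! 1)) \<le> c - 1"
    using assms(3) by blast
  have "\<not> {1..c} \<subseteq> col (hd xs) (xs ! 1)"
  proof
    assume "{1..c} \<subseteq> col (hd xs) (xs ! 1)"
    then have "col (hd xs) (xs ! 1) = {1..c}"
      using range by blast
    then show False
      using \<open>card (col (hd xs) (xs ! 1)) \<le> c - 1\<close> assms(1) by simp
  qed
  then obtain \<gamma> where \<gamma>: "\<gamma> \<in> {1..c}" "\<gamma> \<notin> col (hd xs) (xs ! 1)"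
    by blast
  have "card V \<le> 2 * card {y \<in> V. \<gamma> \<in> col (hd xs) y}"
    using assms(4) \<gamma>(1) \<open>hd xs \<in> V\<close> unfolding col_degree_def by blast
  then have "length xs \<le> card {y \<in> set xs. \<gamma> \<in> col (hd xs) y} + card {y \<in> set xs. multi_edge col (last xs) y}"
    using last_deg unfolding xs(2) len by linarith
  moreover have "\<gamma> \<notin> col (hd xs) (hd xs)" "\<not> multi_edge col (last xs) (last xs)"
    by (simp_all add: loop multi_edge_def)
  ultimately obtain i where i: "Suc i < length xs" "\<gamma> \<in> col (hd xs) (xs ! Suc i)"
      "multi_edge col (last xs) (xs ! i)"
    using posa_crossing_index[of xs "\<lambda>y. \<gamma> \<in> col (hd xs) y" "multi_edge col (last xs)"]
      xs(1) \<open>xs \<noteq> []\<close> by blast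
  show ?thesis
    using has_PC_ham_cycle_if_crossing[OF col_sym xs(1,4) i(1,3,2) \<gamma>(2)] unfolding xs(2) .
qed

theorem mainTheorem12:
  fixes c :: nat and V :: "'a set" and col :: "'a \<Rightarrow> 'a \<Rightarrow> nat set"
  assumes "c \<ge> 3"
    and "ec_multigraph c V col"
    and "\<forall>u\<in>V. \<forall>v\<in>V. u \<noteq> v \<longrightarrow> card (col u v) \<le> c - 1"
    and "\<forall>x\<in>V. \<forall>i\<in>{1..c}. 2 * col_degree V col i x \<ge> card V"
  shows "has_PC_ham_cycle V col"
proof (cases "V = {}")
  case True
  then show ?thesis
    unfolding has_PC_ham_cycle_def PC_ham_cycle_def by auto
next
  case False
  have fin: "finite V"
    using assms(2) unfolding ec_multigraph_def by auto
  have H: "symp (multi_edge col)" "irreflp (multi_edge col)"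
    using assms(2) unfolding ec_multigraph_def multi_edge_def by (auto intro!: sympI irreflpI)
  have deg: "card V < 2 * card {y \<in> V. multi_edge col x y}" if "x \<in> V" for x
    using many_multi_edge_neighbours[OF _ assms(2,3)] assms(1,4) that by simp
  then have "3 \<le> card V"
    using card_neighbours_less[OF H(2) fin] False by fastforce
  then obtain xs where xs: "distinct xs" "set xs = V" "successively (multi_edge col) xs"
    using dirac_hamiltonian_cycle[OF H fin] deg by (metis less_imp_le)
  have "2 \<le> length xs"
    using distinct_card[OF xs(1)] xs(2) \<open>3 \<le> card V\<close> by simp
  then have "xs \<noteq> []"
    by auto
  then have "last xs \<in> V"
    using xs(2) by auto
  then show ?thesis
    using has_PC_ham_cycle_if_ham_path[OF _ assms(2,3,4) xs(1,2) \<open>2 \<le> length xs\<close> xs(3)] assms(1) deg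
    by simp
qed

end
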